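(* Let $q,w$ be real-valued functions with $q,w\in L^1[-1,1]$, $w(x)\neq 0$ for a.e. $x\in[-1,1]$, and suppose $xw(x)>0$ for a.e. $x\in[-1,1]$. Let $\varepsilon_1>0$ satisfy $8\|q_-\|_1^2\, m_1(\varepsilon_1)<1$. If $\lambda\in\mathbb{C}\setminus\mathbb{R}$ is an eigenvalue of the problem $-y''+qy=\lambda w y$, $y(-1)=y(1)=0$, then $$|\operatorname{Re}\lambda|\le \frac{4}{\varepsilon_1}\big(\|q_-\|_1+4\|q_-\|_1^2\big),\qquad |\operatorname{Im}\lambda|\le \frac{4}{\varepsilon_1}\|q_-\|_1 .$$
   Context: $\|\cdot\|_p$ denotes the norm of $L^p[-1,1]$ (Lebesgue measure). $q_-(x)=-\min\{0,q(x)\}$. For $\varepsilon>0$, $S_1(\varepsilon)=\{x\in[-1,1]: xw(x)<\varepsilon\}$ and $m_1(\varepsilon)$ is the Lebesgue measure of $S_1(\varepsilon)$. A number $\lambda\in\mathbb{C}$ is an eigenvalue of $-y''+qy=\lambda wy$, $y(-1)=y(1)=0$, if there is a nontrivial function $y$ with $y,y'$ absolutely continuous on $[-1,1]$ satisfying $-y''+qy=\lambda wy$ a.e. on $[-1,1]$ and $y(-1)=y(1)=0$. *)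

theory Defs
  imports "HOL-Analysis.Analysis"
begin

definition abs_cont_on :: "real \<Rightarrow> real \<Rightarrow> (real \<Rightarrow> 'a::real_normed_vector) \<Rightarrow> bool" where
  "abs_cont_on a b f \<longleftrightarrow>
     (\<forall>e>0. \<exists>d>0. \<forall>n::nat. \<forall>s t :: nat \<Rightarrow> real.
        (\<forall>i<n. a \<le> s i \<and> s i \<le> t i \<and> t i \<le> b) \<and>
        (\<forall>i<n. \<forall>j<n. i \<noteq> j \<longrightarrow> t i \<le> s j \<or> t j \<le> s i) \<and>
        (\<Sum>i<n. t i - s i) < d
        \<longrightarrow> (\<Sum>i<n. norm (f (t i) - f (s i))) < e)"

definition neg_part :: "(real \<Rightarrow> real) \<Rightarrow> real \<Rightarrow> real" where
  "neg_part q x = - min 0 (q x)"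

definition L1norm :: "(real \<Rightarrow> real) \<Rightarrow> real" where
  "L1norm f = (LINT x:{-1..1}|lebesgue. \<bar>f x\<bar>)"

definition S1 :: "(real \<Rightarrow> real) \<Rightarrow> real \<Rightarrow> real set" where
  "S1 w eps = {x \<in> {-1..1}. x * w x < eps}"

definition m1 :: "(real \<Rightarrow> real) \<Rightarrow> real \<Rightarrow> real" where
  "m1 w eps = measure lebesgue (S1 w eps)"

text \<open>Here y1 plays the role of y'
 (y has derivative y1 a.e.), and y'' is the a.e. derivative of y1.\<close>
definition is_eigenvalue :: "(real \<Rightarrow> real) \<Rightarrow> (real \<Rightarrow> real) \<Rightarrow> complex \<Rightarrow> bool" where
  "is_eigenvalue q w lam \<longleftrightarrow>
     (\<exists>y y1 :: real \<Rightarrow> complex.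
        abs_cont_on (-1) 1 y \<and> abs_cont_on (-1) 1 y1 \<and>
        (AE x in lebesgue. x \<in> {-1..1} \<longrightarrow>
            (y has_vector_derivative y1 x) (at x within {-1..1})) \<and>
        (AE x in lebesgue. x \<in> {-1..1} \<longrightarrow>
            (\<exists>y2. (y1 has_vector_derivative y2) (at x within {-1..1}) \<and>
                  - y2 + of_real (q x) * y x = lam * of_real (w x) * y x)) \<and>
        y (-1) = 0 \<and> y 1 = 0 \<and> (\<exists>x\<in>{-1..1}. y x \<noteq> 0))"

end

theory Submission
  imports Defs
begin

text \<open>Let \<open>y\<close> be an eigenfunction and write \<open>\<rho> = |y|\<^sup>2\<close>. Integrating \<open>-y'' + q y = \<lambda> w y\<close>
against \<open>cnj y\<close> gives \<open>\<integral>|y'|\<^sup>2 + \<integral>q\<rho> = \<lambda> \<integral>w\<rho>\<close>; as \<open>Im \<lambda> \<noteq> 0\<close>, this forces \<open>\<integral>w\<rho> = 0\<close> and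
\<open>\<integral>|y'|\<^sup>2 = -\<integral>q\<rho> \<le> \<integral>q\<^sub>-\<rho>\<close>. Integrating against \<open>x cnj y\<close> gives the virial identity
\<open>\<lambda> \<integral>xw\<rho> = \<integral>x(|y'|\<^sup>2 + q\<rho>) + \<integral>y' cnj y\<close>.
With \<open>P = \<integral>|y'||y|\<close> one has \<open>\<rho> \<le> P\<close> pointwise (from \<open>\<rho>' = 2 Re (y' cnj y)\<close> and the boundary
values), hence \<open>\<integral>|y'|\<^sup>2 \<le> \<parallel>q\<^sub>-\<parallel>\<^sub>1 P\<close>, and AM-GM turns this into \<open>P \<le> \<parallel>q\<^sub>-\<parallel>\<^sub>1 \<integral>\<rho>\<close>.
Since \<open>xw \<ge> \<epsilon>\<^sub>1\<close> off \<open>S\<^sub>1(\<epsilon>\<^sub>1)\<close>, \<open>\<integral>xw\<rho> \<ge> \<epsilon>\<^sub>1 (\<integral>\<rho> - P m\<^sub>1(\<epsilon>\<^sub>1)) \<ge> \<epsilon>\<^sub>1/2 \<integral>\<rho>\<close> by the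
smallness of \<open>m\<^sub>1(\<epsilon>\<^sub>1)\<close>, and the real and imaginary parts of the virial identity, divided by
this lower bound, give the claimed estimates, even with 2 in place of 4.
The integrations by parts rest on the fundamental theorem of calculus for absolutely
continuous functions with an almost-everywhere derivative, which follows from a gauge argument:
Henstock sums over tags where the derivative exists are controlled by the derivative, those over
tags in the exceptional null set by absolute continuity.\<close>

section \<open>Absolute continuity\<close>

lemma abs_cont_onD:
  assumes "abs_cont_on a b f" "e > 0"
  obtains d where "d > 0"
    "\<And>(n::nat) s t. \<forall>i<n. a \<le> s i \<and> s i \<le> t i \<and> t i \<le> b \<Longrightarrow>
       \<forall>i<n. \<forall>j<n. i \<noteq> j \<longrightarrow> t i \<le> s j \<or> t j \<le> s i \<Longrightarrow>
       (\<Sum>i<n. t i - s i) < d \<Longrightarrow> (\<Sum>i<n. norm (f (t i) - f (s i))) < e"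
proof -
  obtain d where "d > 0" and d: "\<forall>(n::nat) s t. (\<forall>i<n. a \<le> s i \<and> s i \<le> t i \<and> t i \<le> b) \<and>
       (\<forall>i<n. \<forall>j<n. i \<noteq> j \<longrightarrow> t i \<le> s j \<or> t j \<le> s i) \<and>
       (\<Sum>i<n. t i - s i) < d \<longrightarrow> (\<Sum>i<n. norm (f (t i) - f (s i))) < e"
    using assms(1)[unfolded abs_cont_on_def, rule_format, OF assms(2)] by (elim exE conjE) blast
  show thesis
    by (rule that[OF \<open>d > 0\<close>]) (simp add: d)
qed

lemma abs_cont_on_imp_continuous_on:
  assumes "abs_cont_on a b f"
  shows "continuous_on {a..b} f"
  unfolding continuous_on_iff
proof (intro ballI allI impI)
  fix x e assume x: "x \<in> {a..b}" and e: "(e::real) > 0"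
  obtain d where "d > 0" and d: "\<And>(n::nat) s t. \<forall>i<n. a \<le> s i \<and> s i \<le> t i \<and> t i \<le> b \<Longrightarrow>
       \<forall>i<n. \<forall>j<n. i \<noteq> j \<longrightarrow> t i \<le> s j \<or> t j \<le> s i \<Longrightarrow>
       (\<Sum>i<n. t i - s i) < d \<Longrightarrow> (\<Sum>i<n. norm (f (t i) - f (s i))) < e"
    using abs_cont_onD[OF assms e] by blast
  have "dist (f x') (f x) < e" if "x' \<in> {a..b}" "dist x' x < d" for x'
  proof -
    have "norm (f (max x x') - f (min x x')) < e"
      using d[of 1 "\<lambda>_. min x x'" "\<lambda>_. max x x'"] x that by (auto simp: dist_real_def)
    then show ?thesis
      by (cases "x \<le> x'") (auto simp: dist_norm norm_minus_commute max_def min_def)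
  qed
  with \<open>d > 0\<close> show "\<exists>d>0. \<forall>x'\<in>{a..b}. dist x' x < d \<longrightarrow> dist (f x') (f x) < e" by blast
qed

lemma abs_cont_on_subinterval:
  assumes "abs_cont_on a b f" "a \<le> c" "d \<le> b"
  shows "abs_cont_on c d f"
  unfolding abs_cont_on_def
proof (intro allI impI)
  fix e :: real assume "e > 0"
  then obtain \<delta> where "\<delta> > 0" and \<delta>: "\<And>(n::nat) s t. \<forall>i<n. a \<le> s i \<and> s i \<le> t i \<and> t i \<le> b \<Longrightarrow>
       \<forall>i<n. \<forall>j<n. i \<noteq> j \<longrightarrow> t i \<le> s j \<or> t j \<le> s i \<Longrightarrow>
       (\<Sum>i<n. t i - s i) < \<delta> \<Longrightarrow> (\<Sum>i<n. norm (f (t i) - f (s i))) < e"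
    using abs_cont_onD[OF assms(1)] by blast
  show "\<exists>\<delta>>0. \<forall>(n::nat) s t. (\<forall>i<n. c \<le> s i \<and> s i \<le> t i \<and> t i \<le> d) \<and>
        (\<forall>i<n. \<forall>j<n. i \<noteq> j \<longrightarrow> t i \<le> s j \<or> t j \<le> s i) \<and> (\<Sum>i<n. t i - s i) < \<delta> \<longrightarrow>
        (\<Sum>i<n. norm (f (t i) - f (s i))) < e"
  proof (intro exI[of _ \<delta>] conjI allI impI)
    fix n :: nat and s t :: "nat \<Rightarrow> real"
    assume "(\<forall>i<n. c \<le> s i \<and> s i \<le> t i \<and> t i \<le> d) \<and>
        (\<forall>i<n. \<forall>j<n. i \<noteq> j \<longrightarrow> t i \<le> s j \<or> t j \<le> s i) \<and> (\<Sum>i<n. t i - s i) < \<delta>"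
    with assms(2,3) show "(\<Sum>i<n. norm (f (t i) - f (s i))) < e"
      by (intro \<delta>) force+
  qed (rule \<open>\<delta> > 0\<close>)
qed

lemma abs_cont_on_of_real: "abs_cont_on a b (\<lambda>x. of_real x :: 'a::real_normed_algebra_1)"
  unfolding abs_cont_on_def
proof (intro allI impI exI conjI)
  fix e :: real and n :: nat and s t :: "nat \<Rightarrow> real"
  assume "e > 0"
    and st: "(\<forall>i<n. a \<le> s i \<and> s i \<le> t i \<and> t i \<le> b) \<and>
      (\<forall>i<n. \<forall>j<n. i \<noteq> j \<longrightarrow> t i \<le> s j \<or> t j \<le> s i) \<and> (\<Sum>i<n. t i - s i) < e"
  have "(\<Sum>i<n. norm (of_real (t i) - of_real (s i) :: 'a)) = (\<Sum>i<n. t i - s i)"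
    using st by (intro sum.cong) (auto simp flip: of_real_diff)
  with st show "(\<Sum>i<n. norm (of_real (t i) - of_real (s i) :: 'a)) < e" by simp
qed

lemma abs_cont_on_cnj:
  assumes "abs_cont_on a b f"
  shows "abs_cont_on a b (\<lambda>x. cnj (f x))"
  using assms unfolding abs_cont_on_def by (simp flip: complex_cnj_diff)

lemma abs_cont_on_mult:
  fixes f g :: "real \<Rightarrow> 'a::real_normed_algebra"
  assumes f: "abs_cont_on a b f" and g: "abs_cont_on a b g"
  shows "abs_cont_on a b (\<lambda>x. f x * g x)"
  unfolding abs_cont_on_def
proof (intro allI impI)
  fix e :: real assume "e > 0"
  obtain Mf where "Mf > 0" and Mf: "\<And>x. x \<in> {a..b} \<Longrightarrow> norm (f x) \<le> Mf"
    using compact_imp_bounded[OF compact_continuous_image[OF abs_cont_on_imp_continuous_on[OF f]]]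
    unfolding bounded_pos by auto
  obtain Mg where "Mg > 0" and Mg: "\<And>x. x \<in> {a..b} \<Longrightarrow> norm (g x) \<le> Mg"
    using compact_imp_bounded[OF compact_continuous_image[OF abs_cont_on_imp_continuous_on[OF g]]]
    unfolding bounded_pos by auto
  have "e / (2 * Mg) > 0" "e / (2 * Mf) > 0" using \<open>e > 0\<close> \<open>Mf > 0\<close> \<open>Mg > 0\<close> by simp_all
  obtain d1 where "d1 > 0" and d1: "\<And>(n::nat) s t. \<forall>i<n. a \<le> s i \<and> s i \<le> t i \<and> t i \<le> b \<Longrightarrow>
       \<forall>i<n. \<forall>j<n. i \<noteq> j \<longrightarrow> t i \<le> s j \<or> t j \<le> s i \<Longrightarrow>
       (\<Sum>i<n. t i - s i) < d1 \<Longrightarrow> (\<Sum>i<n. norm (f (t i) - f (s i))) < e / (2 * Mg)"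
    using abs_cont_onD[OF f \<open>e / (2 * Mg) > 0\<close>] by blast
  obtain d2 where "d2 > 0" and d2: "\<And>(n::nat) s t. \<forall>i<n. a \<le> s i \<and> s i \<le> t i \<and> t i \<le> b \<Longrightarrow>
       \<forall>i<n. \<forall>j<n. i \<noteq> j \<longrightarrow> t i \<le> s j \<or> t j \<le> s i \<Longrightarrow>
       (\<Sum>i<n. t i - s i) < d2 \<Longrightarrow> (\<Sum>i<n. norm (g (t i) - g (s i))) < e / (2 * Mf)"
    using abs_cont_onD[OF g \<open>e / (2 * Mf) > 0\<close>] by blast
  show "\<exists>d>0. \<forall>(n::nat) s t. (\<forall>i<n. a \<le> s i \<and> s i \<le> t i \<and> t i \<le> b) \<and>
        (\<forall>i<n. \<forall>j<n. i \<noteq> j \<longrightarrow> t i \<le> s j \<or> t j \<le> s i) \<and> (\<Sum>i<n. t i - s i) < d \<longrightarrow>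
        (\<Sum>i<n. norm (f (t i) * g (t i) - f (s i) * g (s i))) < e"
  proof (intro exI[of _ "min d1 d2"] conjI allI impI)
    fix n :: nat and s t :: "nat \<Rightarrow> real" assume st: "(\<forall>i<n. a \<le> s i \<and> s i \<le> t i \<and> t i \<le> b) \<and>
        (\<forall>i<n. \<forall>j<n. i \<noteq> j \<longrightarrow> t i \<le> s j \<or> t j \<le> s i) \<and> (\<Sum>i<n. t i - s i) < min d1 d2"
    have "(\<Sum>i<n. norm (f (t i) * g (t i) - f (s i) * g (s i)))
        \<le> (\<Sum>i<n. Mg * norm (f (t i) - f (s i)) + Mf * norm (g (t i) - g (s i)))"
    proof (rule sum_mono)
      fix i assume "i \<in> {..<n}"
      then have "s i \<in> {a..b}" "t i \<in> {a..b}" using st by auto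
      have "f (t i) * g (t i) - f (s i) * g (s i) = (f (t i) - f (s i)) * g (t i) + f (s i) * (g (t i) - g (s i))"
        by (simp add: algebra_simps)
      then have "norm (f (t i) * g (t i) - f (s i) * g (s i))
          \<le> norm (f (t i) - f (s i)) * norm (g (t i)) + norm (f (s i)) * norm (g (t i) - g (s i))"
        by (metis order_trans[OF norm_triangle_ineq add_mono[OF norm_mult_ineq norm_mult_ineq]])
      also have "\<dots> \<le> norm (f (t i) - f (s i)) * Mg + Mf * norm (g (t i) - g (s i))"
        using \<open>s i \<in> _\<close> \<open>t i \<in> _\<close> by (intro add_mono mult_left_mono mult_right_mono Mf Mg) auto
      finally show "norm (f (t i) * g (t i) - f (s i) * g (s i))
          \<le> Mg * norm (f (t i) - f (s i)) + Mf * norm (g (t i) - g (s i))"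
        by (simp add: mult.commute)
    qed
    also have "\<dots> = Mg * (\<Sum>i<n. norm (f (t i) - f (s i))) + Mf * (\<Sum>i<n. norm (g (t i) - g (s i)))"
      by (simp add: sum.distrib sum_distrib_left)
    also have "\<dots> < Mg * (e / (2 * Mg)) + Mf * (e / (2 * Mf))"
      using st d1[of n s t] d2[of n s t] \<open>Mf > 0\<close> \<open>Mg > 0\<close>
      by (intro add_strict_mono mult_strict_left_mono) auto
    also have "\<dots> = e" using \<open>Mf > 0\<close> \<open>Mg > 0\<close> by simp
    finally show "(\<Sum>i<n. norm (f (t i) * g (t i) - f (s i) * g (s i))) < e" .
  qed (use \<open>d1 > 0\<close> \<open>d2 > 0\<close> in simp)
qed

lemma greaterThanLessThan_disjointD:
  fixes u1 v1 u2 v2 :: real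
  assumes "u1 < v1" "u2 < v2" "{u1<..<v1} \<inter> {u2<..<v2} = {}"
  shows "v1 \<le> u2 \<or> v2 \<le> u1"
proof (rule ccontr)
  assume "\<not> ?thesis"
  then have "(max u1 u2 + min v1 v2) / 2 \<in> {u1<..<v1} \<inter> {u2<..<v2}"
    using assms(1,2) by (auto simp: max_def min_def)
  with assms(3) show False by blast
qed

lemma division_of_real_intervalD:
  fixes K :: "real set"
  assumes "\<D> division_of S" "K \<in> \<D>"
  shows "K = {Inf K..Sup K}" "Inf K \<le> Sup K"
proof -
  obtain u v :: real where "K = cbox u v" "K \<noteq> {}"
    using division_ofD(3,4)[OF assms] by blast
  then show "K = {Inf K..Sup K}" "Inf K \<le> Sup K" by auto
qed

lemma abs_cont_on_interval_family_sum_less: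
  fixes f :: "real \<Rightarrow> 'a::real_normed_vector"
  assumes "abs_cont_on a b f" "e > 0"
  obtains \<delta> where "\<delta> > 0"
    "\<And>\<D>. finite \<D> \<Longrightarrow> (\<And>K. K \<in> \<D> \<Longrightarrow> K = {Inf K..Sup K} \<and> a \<le> Inf K \<and> Inf K < Sup K \<and> Sup K \<le> b) \<Longrightarrow>
       pairwise (\<lambda>K L. interior K \<inter> interior L = {}) \<D> \<Longrightarrow> (\<Sum>K\<in>\<D>. Sup K - Inf K) < \<delta> \<Longrightarrow>
       (\<Sum>K\<in>\<D>. norm (f (Sup K) - f (Inf K))) < e"
proof -
  obtain \<delta> where "\<delta> > 0" and \<delta>: "\<And>(n::nat) s t. \<forall>i<n. a \<le> s i \<and> s i \<le> t i \<and> t i \<le> b \<Longrightarrow>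
       \<forall>i<n. \<forall>j<n. i \<noteq> j \<longrightarrow> t i \<le> s j \<or> t j \<le> s i \<Longrightarrow>
       (\<Sum>i<n. t i - s i) < \<delta> \<Longrightarrow> (\<Sum>i<n. norm (f (t i) - f (s i))) < e"
    using abs_cont_onD[OF assms] by blast
  have "(\<Sum>K\<in>\<D>. norm (f (Sup K) - f (Inf K))) < e"
    if "finite \<D>" and K: "\<And>K. K \<in> \<D> \<Longrightarrow> K = {Inf K..Sup K} \<and> a \<le> Inf K \<and> Inf K < Sup K \<and> Sup K \<le> b"
      and disjoint: "pairwise (\<lambda>K L. interior K \<inter> interior L = {}) \<D>"
      and length: "(\<Sum>K\<in>\<D>. Sup K - Inf K) < \<delta>" for \<D>
  proof -
    obtain h where h: "bij_betw h {..<card \<D>} \<D>"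
      using ex_bij_betw_nat_finite[OF \<open>finite \<D>\<close>] lessThan_atLeast0 by metis
    have "h i \<in> \<D>" if "i < card \<D>" for i
      using bij_betwE[OF h] that by blast
    then have bounds: "\<forall>i<card \<D>. a \<le> Inf (h i) \<and> Inf (h i) \<le> Sup (h i) \<and> Sup (h i) \<le> b"
      using K by force
    have ordered: "\<forall>i<card \<D>. \<forall>j<card \<D>. i \<noteq> j \<longrightarrow> Sup (h i) \<le> Inf (h j) \<or> Sup (h j) \<le> Inf (h i)"
    proof (intro allI impI)
      fix i j assume ij: "i < card \<D>" "j < card \<D>" "i \<noteq> j"
      then have "h i \<noteq> h j" "h i \<in> \<D>" "h j \<in> \<D>"
        using bij_betw_imp_inj_on[OF h] bij_betwE[OF h] by (auto dest: inj_onD)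
      then have "interior (h i) \<inter> interior (h j) = {}"
        using disjoint by (auto simp: pairwise_def)
      then have "{Inf (h i)<..<Sup (h i)} \<inter> {Inf (h j)<..<Sup (h j)} = {}"
        using K \<open>h i \<in> \<D>\<close> \<open>h j \<in> \<D>\<close> by (metis interior_atLeastAtMost_real)
      then show "Sup (h i) \<le> Inf (h j) \<or> Sup (h j) \<le> Inf (h i)"
        using greaterThanLessThan_disjointD K \<open>h i \<in> \<D>\<close> \<open>h j \<in> \<D>\<close> by blast
    qed
    have "(\<Sum>i<card \<D>. norm (f (Sup (h i)) - f (Inf (h i)))) < e"
      using \<delta> bounds ordered length sum.reindex_bij_betw[OF h, of "\<lambda>K. Sup K - Inf K"] by simp
    then show ?thesis
      using sum.reindex_bij_betw[OF h, of "\<lambda>K. norm (f (Sup K) - f (Inf K))"] by simp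
  qed
  with \<open>\<delta> > 0\<close> that show thesis by blast
qed

lemma abs_cont_on_division_sum_less:
  fixes f :: "real \<Rightarrow> 'a::real_normed_vector"
  assumes "abs_cont_on a b f" "e > 0"
  obtains \<delta> where "\<delta> > 0"
    "\<And>\<D>. \<D> division_of \<Union>\<D> \<Longrightarrow> \<Union>\<D> \<subseteq> {a..b} \<Longrightarrow> measure lebesgue (\<Union>\<D>) < \<delta> \<Longrightarrow>
       (\<Sum>K\<in>\<D>. norm (f (Sup K) - f (Inf K))) < e"
proof -
  obtain \<delta> where "\<delta> > 0" and \<delta>: "\<And>\<D>. finite \<D> \<Longrightarrow>
      (\<And>K. K \<in> \<D> \<Longrightarrow> K = {Inf K..Sup K} \<and> a \<le> Inf K \<and> Inf K < Sup K \<and> Sup K \<le> b) \<Longrightarrow>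
      pairwise (\<lambda>K L. interior K \<inter> interior L = {}) \<D> \<Longrightarrow> (\<Sum>K\<in>\<D>. Sup K - Inf K) < \<delta> \<Longrightarrow>
      (\<Sum>K\<in>\<D>. norm (f (Sup K) - f (Inf K))) < e"
    using abs_cont_on_interval_family_sum_less[OF assms] by blast
  have "(\<Sum>K\<in>\<D>. norm (f (Sup K) - f (Inf K))) < e"
    if \<D>: "\<D> division_of \<Union>\<D>" "\<Union>\<D> \<subseteq> {a..b}" "measure lebesgue (\<Union>\<D>) < \<delta>" for \<D>
  proof -
    note K = division_of_real_intervalD[OF \<D>(1)]
    \<comment> \<open>degenerate intervals contribute nothing\<close>
    define \<D>' where "\<D>' = {K \<in> \<D>. Inf K < Sup K}"
    have "(\<Sum>K\<in>\<D>'. Sup K - Inf K) = (\<Sum>K\<in>\<D>'. measure lebesgue K)"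
    proof (intro sum.cong refl)
      fix K assume "K \<in> \<D>'"
      then have "K = {Inf K..Sup K}" "Inf K < Sup K" using K by (auto simp: \<D>'_def)
      moreover have "measure lebesgue {Inf K..Sup K} = Sup K - Inf K"
        using \<open>Inf K < Sup K\<close> by simp
      ultimately show "Sup K - Inf K = measure lebesgue K" by metis
    qed
    also have "\<dots> \<le> (\<Sum>K\<in>\<D>. measure lebesgue K)"
      using \<D>(1) by (intro sum_mono2) (auto simp: \<D>'_def)
    also have "\<dots> = measure lebesgue (\<Union>\<D>)"
      by (rule content_division[OF \<D>(1)])
    finally have "(\<Sum>K\<in>\<D>'. norm (f (Sup K) - f (Inf K))) < e"
    proof (intro \<delta>)
      show "finite \<D>'" using \<D>(1) by (auto simp: \<D>'_def)
      show "pairwise (\<lambda>K L. interior K \<inter> interior L = {}) \<D>'"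
        using division_ofD(5)[OF \<D>(1)] by (auto simp: pairwise_def \<D>'_def)
      show "K = {Inf K..Sup K} \<and> a \<le> Inf K \<and> Inf K < Sup K \<and> Sup K \<le> b" if "K \<in> \<D>'" for K
      proof -
        have "K \<in> \<D>" "Inf K < Sup K" using that by (auto simp: \<D>'_def)
        moreover obtain u v where "K = {u..v}" "u \<le> v"
          using K \<open>K \<in> \<D>\<close> by blast
        moreover have "K \<subseteq> {a..b}" using \<open>K \<in> \<D>\<close> \<D>(2) by auto
        ultimately show ?thesis by auto
      qed
    qed (use \<D>(3) in linarith)
    moreover have "(\<Sum>K\<in>\<D>'. norm (f (Sup K) - f (Inf K))) = (\<Sum>K\<in>\<D>. norm (f (Sup K) - f (Inf K)))"
      using \<D>(1) K(2) by (intro sum.mono_neutral_left) (force simp: \<D>'_def)+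
    ultimately show ?thesis by simp
  qed
  with \<open>\<delta> > 0\<close> that show thesis by blast
qed

lemma abs_cont_on_tagged_sum_less:
  fixes f :: "real \<Rightarrow> 'a::real_normed_vector"
  assumes "abs_cont_on a b f" "e > 0"
  obtains \<delta> where "\<delta> > 0"
    "\<And>p. p tagged_partial_division_of {a..b} \<Longrightarrow> measure lebesgue (\<Union>(snd ` p)) < \<delta> \<Longrightarrow>
       (\<Sum>(x,K)\<in>p. norm (f (Sup K) - f (Inf K))) < e"
proof -
  obtain \<delta> where "\<delta> > 0" and \<delta>: "\<And>\<D>. \<D> division_of \<Union>\<D> \<Longrightarrow> \<Union>\<D> \<subseteq> {a..b} \<Longrightarrow>
      measure lebesgue (\<Union>\<D>) < \<delta> \<Longrightarrow> (\<Sum>K\<in>\<D>. norm (f (Sup K) - f (Inf K))) < e"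
    using abs_cont_on_division_sum_less[OF assms] by blast
  have "(\<Sum>(x,K)\<in>p. norm (f (Sup K) - f (Inf K))) < e"
    if p: "p tagged_partial_division_of {a..b}" "measure lebesgue (\<Union>(snd ` p)) < \<delta>" for p
  proof -
    have "\<Union>(snd ` p) \<subseteq> {a..b}"
      using tagged_partial_division_ofD(3)[OF p(1)] by force
    then have "(\<Sum>K\<in>snd ` p. norm (f (Sup K) - f (Inf K))) < e"
      using \<delta>[OF partial_division_of_tagged_division[OF p(1)]] p(2) by blast
    moreover have "(\<Sum>K\<in>snd ` p. norm (f (Sup K) - f (Inf K)))
        = (\<Sum>(x,K)\<in>p. norm (f (Sup K) - f (Inf K)))"
    proof (subst sum.reindex_nontrivial)
      show "norm (f (Sup (snd xK)) - f (Inf (snd xK))) = 0"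
        if "xK \<in> p" "yL \<in> p" "xK \<noteq> yL" "snd xK = snd yL" for xK yL
      proof -
        \<comment> \<open>two tags sharing an interval force it to be degenerate\<close>
        obtain u v where K: "snd xK = {u..v}" "u \<le> v"
          using tagged_partial_division_ofD(2,4)[OF p(1), of "fst xK" "snd xK"] \<open>xK \<in> p\<close>
          by (metis cbox_interval atLeastAtMost_iff order_trans prod.collapse)
        have "interior (snd xK) = {}"
          using tagged_partial_division_ofD(5)[OF p(1), of "fst xK" "snd xK" "fst yL" "snd yL"] that
          by (metis inf.idem prod.collapse)
        then show ?thesis using K by simp
      qed
    qed (use tagged_partial_division_ofD(1)[OF p(1)] in \<open>auto simp: split_def\<close>)
    ultimately show ?thesis by simp
  qed
  with \<open>\<delta> > 0\<close> that show thesis by blast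
qed

section \<open>Fundamental theorem of calculus for absolutely continuous functions\<close>

hide_const (open) Polynomial.content

lemma negligible_imp_small_open_superset:
  assumes "negligible N" "e > 0"
  obtains T where "open T" "N \<subseteq> T" "T \<in> lmeasurable" "measure lebesgue T < e"
proof -
  have N: "N \<in> lmeasurable" "measure lebesgue N = 0"
    using assms(1) negligible_imp_measurable negligible_imp_measure0 by blast+
  obtain T where T: "open T" "N \<subseteq> T" "T - N \<in> lmeasurable" "emeasure lebesgue (T - N) < ennreal e"
    using sets_lebesgue_outer_open[OF fmeasurableD[OF N(1)] assms(2)] by blast
  have "T = (T - N) \<union> N" using T(2) by auto
  then have "T \<in> lmeasurable" "measure lebesgue T \<le> measure lebesgue (T - N) + measure lebesgue N"
    using T(3) N(1) by (metis fmeasurable.Un, metis measure_Un_le fmeasurableD)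
  moreover have "measure lebesgue (T - N) < e"
    using T(3,4) assms(2) by (simp add: emeasure_eq_measure2 ennreal_less_iff)
  ultimately show thesis using that T(1,2) N(2) by force
qed

lemma derivative_increment_estimate:
  fixes f :: "real \<Rightarrow> 'a::real_normed_vector"
  assumes "x \<in> {u..v}"
    and "\<And>y. y \<in> {u..v} \<Longrightarrow> norm (f y - f x - (y - x) *\<^sub>R f') \<le> \<epsilon> * \<bar>y - x\<bar>"
  shows "norm ((v - u) *\<^sub>R f' - (f v - f u)) \<le> \<epsilon> * (v - u)"
proof -
  have "(v - u) *\<^sub>R f' - (f v - f u) = (f u - f x - (u - x) *\<^sub>R f') - (f v - f x - (v - x) *\<^sub>R f')"
    by (simp add: algebra_simps)
  then have "norm ((v - u) *\<^sub>R f' - (f v - f u))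
      \<le> norm (f u - f x - (u - x) *\<^sub>R f') + norm (f v - f x - (v - x) *\<^sub>R f')"
    by (metis norm_triangle_ineq4)
  also have "\<dots> \<le> \<epsilon> * \<bar>u - x\<bar> + \<epsilon> * \<bar>v - x\<bar>"
    using assms(2)[of u] assms(2)[of v] assms(1) by (intro add_mono) auto
  also have "\<dots> = \<epsilon> * (v - u)"
    using assms(1) by (simp add: algebra_simps)
  finally show ?thesis .
qed

lemma has_vector_derivative_uniform_gauge:
  fixes f :: "real \<Rightarrow> 'a::real_normed_vector"
  assumes "\<And>x. x \<in> S \<Longrightarrow> (f has_vector_derivative f' x) (at x within T)" "\<epsilon> > 0"
  obtains d where "\<And>x. d x > 0"
    "\<And>x y. x \<in> S \<Longrightarrow> y \<in> T \<Longrightarrow> norm (y - x) < d x \<Longrightarrow>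
       norm (f y - f x - (y - x) *\<^sub>R f' x) \<le> \<epsilon> * norm (y - x)"
proof -
  have "\<forall>x. \<exists>d>0. x \<in> S \<longrightarrow>
      (\<forall>y\<in>T. norm (y - x) < d \<longrightarrow> norm (f y - f x - (y - x) *\<^sub>R f' x) \<le> \<epsilon> * norm (y - x))"
    using assms unfolding has_vector_derivative_def has_derivative_within_alt by blast
  then show thesis using that by metis
qed

lemma riemann_sum_increment_estimate:
  fixes f g :: "real \<Rightarrow> 'a::real_normed_vector"
  assumes "a \<le> b" and p: "p tagged_division_of {a..b}"
    and good: "\<And>x K. (x,K) \<in> p \<Longrightarrow> x \<notin> N \<Longrightarrow>
      norm (content K *\<^sub>R g x - (f (Sup K) - f (Inf K))) \<le> \<epsilon> * content K"
    and bad: "(\<Sum>(x,K)\<in>{(x,K) \<in> p. x \<in> N}. norm (f (Sup K) - f (Inf K))) < \<eta>"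
    and "0 \<le> \<epsilon>"
  shows "norm ((\<Sum>(x,K)\<in>p. content K *\<^sub>R (if x \<in> N then 0 else g x)) - (f b - f a)) < \<epsilon> * (b - a) + \<eta>"
proof -
  define G where "G x = (if x \<in> N then 0 else g x)" for x
  define P where "P = {(x,K) \<in> p. x \<in> N}"
  have "finite p" "P \<subseteq> p" using p by (auto simp: P_def)
  have "norm ((\<Sum>(x,K)\<in>p. content K *\<^sub>R G x) - (f b - f a))
      = norm (\<Sum>(x,K)\<in>p. content K *\<^sub>R G x - (f (Sup K) - f (Inf K)))"
    using additive_tagged_division_1[OF \<open>a \<le> b\<close> p, of f] by (simp add: split_def sum_subtractf)
  also have "\<dots> \<le> (\<Sum>(x,K)\<in>p. norm (content K *\<^sub>R G x - (f (Sup K) - f (Inf K))))"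
    by (rule norm_sum[THEN order_trans]) (simp add: split_def)
  also have "\<dots> = (\<Sum>(x,K)\<in>p - P. norm (content K *\<^sub>R G x - (f (Sup K) - f (Inf K))))
      + (\<Sum>(x,K)\<in>P. norm (f (Sup K) - f (Inf K)))"
  proof -
    have "(\<Sum>(x,K)\<in>P. norm (content K *\<^sub>R G x - (f (Sup K) - f (Inf K))))
        = (\<Sum>(x,K)\<in>P. norm (f (Sup K) - f (Inf K)))"
      by (intro sum.cong) (auto simp: P_def G_def norm_minus_commute)
    then show ?thesis
      by (subst sum.subset_diff[OF \<open>P \<subseteq> p\<close> \<open>finite p\<close>]) simp
  qed
  also have "\<dots> < (\<Sum>(x,K)\<in>p. \<epsilon> * content K) + \<eta>"
  proof (rule add_le_less_mono)
    have "(\<Sum>(x,K)\<in>p - P. norm (content K *\<^sub>R G x - (f (Sup K) - f (Inf K))))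
        \<le> (\<Sum>(x,K)\<in>p - P. \<epsilon> * content K)"
      using good by (intro sum_mono) (force simp: P_def G_def)
    also have "\<dots> \<le> (\<Sum>(x,K)\<in>p. \<epsilon> * content K)"
      using \<open>finite p\<close> \<open>0 \<le> \<epsilon>\<close> by (intro sum_mono2) auto
    finally show "(\<Sum>(x,K)\<in>p - P. norm (content K *\<^sub>R G x - (f (Sup K) - f (Inf K))))
        \<le> (\<Sum>(x,K)\<in>p. \<epsilon> * content K)" .
  qed (use bad in \<open>simp add: P_def\<close>)
  also have "(\<Sum>(x,K)\<in>p. \<epsilon> * content K) = \<epsilon> * (b - a)"
    using additive_content_tagged_division[of p a b] p \<open>a \<le> b\<close>
    by (simp add: sum_distrib_left[symmetric] split_def)
  finally show ?thesis by (simp add: G_def)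
qed

lemma fundamental_theorem_of_calculus_abs_cont:
  fixes f g :: "real \<Rightarrow> 'a::banach"
  assumes "a \<le> b" and f: "abs_cont_on a b f" and N: "negligible N"
    and f': "\<And>x. x \<in> {a..b} - N \<Longrightarrow> (f has_vector_derivative g x) (at x within {a..b})"
  shows "(g has_integral (f b - f a)) {a..b}"
proof -
  define G where "G x = (if x \<in> N then 0 else g x)" for x
  have "(G has_integral (f b - f a)) {a..b}"
    unfolding has_integral_real
  proof (intro allI impI)
    fix e :: real assume "e > 0"
    then have "e / 2 > 0" by simp
    then obtain \<delta> where "\<delta> > 0" and \<delta>: "\<And>p. p tagged_partial_division_of {a..b} \<Longrightarrow>
        measure lebesgue (\<Union>(snd ` p)) < \<delta> \<Longrightarrow> (\<Sum>(x,K)\<in>p. norm (f (Sup K) - f (Inf K))) < e / 2"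
      using abs_cont_on_tagged_sum_less[OF f] by blast
    obtain T where T: "open T" "N \<subseteq> T" "T \<in> lmeasurable" "measure lebesgue T < \<delta>"
      using negligible_imp_small_open_superset[OF N \<open>\<delta> > 0\<close>] by blast
    define \<epsilon> where "\<epsilon> = e / (2 * (b - a + 1))"
    have "\<epsilon> > 0" using \<open>e > 0\<close> \<open>a \<le> b\<close> by (simp add: \<epsilon>_def)
    obtain d where d: "\<And>x. d x > 0" "\<And>x y. x \<in> {a..b} - N \<Longrightarrow> y \<in> {a..b} \<Longrightarrow> norm (y - x) < d x
        \<Longrightarrow> norm (f y - f x - (y - x) *\<^sub>R g x) \<le> \<epsilon> * norm (y - x)"
      using has_vector_derivative_uniform_gauge[OF f' \<open>\<epsilon> > 0\<close>] by blast
    have "\<forall>x. \<exists>r>0. x \<in> N \<longrightarrow> ball x r \<subseteq> T"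
      using T(1,2) open_contains_ball by blast
    then obtain r where r: "\<And>x. r x > 0" "\<And>x. x \<in> N \<Longrightarrow> ball x (r x) \<subseteq> T"
      by metis
    define \<gamma> where "\<gamma> x = ball x (if x \<in> N then r x else d x)" for x
    have "norm ((\<Sum>(x,K)\<in>p. content K *\<^sub>R G x) - (f b - f a)) < e"
      if p: "p tagged_division_of {a..b}" "\<gamma> fine p" for p
    proof -
      have good: "norm (content K *\<^sub>R g x - (f (Sup K) - f (Inf K))) \<le> \<epsilon> * content K"
        if xK: "(x,K) \<in> p" "x \<notin> N" for x K
      proof -
        obtain u v where K: "K = {u..v}" "x \<in> {u..v}"
          using tagged_division_ofD(2,4)[OF p(1) xK(1)] by (metis cbox_interval)
        have "{u..v} \<subseteq> {a..b}" "{u..v} \<subseteq> ball x (d x)"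
          using tagged_division_ofD(3)[OF p(1) xK(1)] fineD[OF p(2) xK(1)] K xK(2)
          by (auto simp: \<gamma>_def)
        then have "norm (f y - f x - (y - x) *\<^sub>R g x) \<le> \<epsilon> * \<bar>y - x\<bar>" if "y \<in> {u..v}" for y
          using d(2)[of x y] that K(2) xK(2) by (auto simp: dist_norm norm_minus_commute)
        then have "norm ((v - u) *\<^sub>R g x - (f v - f u)) \<le> \<epsilon> * (v - u)"
          by (rule derivative_increment_estimate[OF K(2)])
        then show ?thesis using K by simp
      qed
      have bad: "(\<Sum>(x,K)\<in>{(x,K) \<in> p. x \<in> N}. norm (f (Sup K) - f (Inf K))) < e / 2"
      proof (rule \<delta>)
        let ?P = "{(x,K) \<in> p. x \<in> N}"
        show P: "?P tagged_partial_division_of {a..b}"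
          using p(1) by (auto simp: tagged_division_of_def intro: tagged_partial_division_subset)
        have "\<Union>(snd ` ?P) \<subseteq> T"
          using fineD[OF p(2)] r(2) by (force simp: \<gamma>_def)
        moreover have "\<Union>(snd ` ?P) \<in> lmeasurable"
          by (rule lmeasurable_division[OF partial_division_of_tagged_division[OF P]])
        ultimately have "measure lebesgue (\<Union>(snd ` ?P)) \<le> measure lebesgue T"
          using T(3) by (intro measure_mono_fmeasurable) auto
        then show "measure lebesgue (\<Union>(snd ` ?P)) < \<delta>"
          using T(4) by linarith
      qed
      have "norm ((\<Sum>(x,K)\<in>p. content K *\<^sub>R G x) - (f b - f a)) < \<epsilon> * (b - a) + e / 2"
        unfolding G_def using \<open>\<epsilon> > 0\<close>
        by (intro riemann_sum_increment_estimate[OF \<open>a \<le> b\<close> p(1) good bad]) auto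
      also have "\<epsilon> * (b - a) + e / 2 \<le> e"
        using \<open>e > 0\<close> \<open>a \<le> b\<close> by (simp add: \<epsilon>_def field_simps)
      finally show ?thesis .
    qed
    moreover have "gauge \<gamma>" using r(1) d(1) by (auto simp: gauge_def \<gamma>_def)
    ultimately show "\<exists>\<gamma>. gauge \<gamma> \<and> (\<forall>p. p tagged_division_of {a..b} \<and> \<gamma> fine p \<longrightarrow>
        norm ((\<Sum>(x,K)\<in>p. content K *\<^sub>R G x) - (f b - f a)) < e)" by blast
  qed
  then show ?thesis
    by (rule has_integral_spike[OF N, rotated]) (simp add: G_def)
qed

lemma abs_cont_on_integration_by_parts:
  fixes f g f' g' :: "real \<Rightarrow> 'a::{banach, real_normed_algebra}"
  assumes "a \<le> b" "abs_cont_on a b f" "abs_cont_on a b g" "negligible N"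
    and "\<And>x. x \<in> {a..b} - N \<Longrightarrow> (f has_vector_derivative f' x) (at x within {a..b})"
    and "\<And>x. x \<in> {a..b} - N \<Longrightarrow> (g has_vector_derivative g' x) (at x within {a..b})"
  shows "((\<lambda>x. f x * g' x + f' x * g x) has_integral (f b * g b - f a * g a)) {a..b}"
proof (rule fundamental_theorem_of_calculus_abs_cont[OF assms(1) abs_cont_on_mult[OF assms(2,3)] assms(4)])
  fix x assume "x \<in> {a..b} - N"
  then show "((\<lambda>x. f x * g x) has_vector_derivative f x * g' x + f' x * g x) (at x within {a..b})"
    by (intro has_vector_derivative_mult assms(5,6))
qed

lemma norm_sq_increment_le:
  fixes y y' :: "real \<Rightarrow> complex"
  assumes "c \<le> d" "abs_cont_on c d y" "continuous_on {c..d} y'" "negligible N"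
    and "\<And>x. x \<in> {c..d} - N \<Longrightarrow> (y has_vector_derivative y' x) (at x within {c..d})"
  shows "\<bar>(cmod (y d))\<^sup>2 - (cmod (y c))\<^sup>2\<bar> \<le> 2 * integral {c..d} (\<lambda>x. cmod (y' x) * cmod (y x))"
proof -
  have "((\<lambda>x. y x * cnj (y' x) + y' x * cnj (y x)) has_integral (y d * cnj (y d) - y c * cnj (y c))) {c..d}"
    using assms(5)
    by (intro abs_cont_on_integration_by_parts[OF assms(1,2) abs_cont_on_cnj[OF assms(2)] assms(4)]
        has_vector_derivative_cnj)
  from has_integral_linear[OF this bounded_linear_Re]
  have F: "((\<lambda>x. 2 * Re (y' x * cnj (y x))) has_integral ((cmod (y d))\<^sup>2 - (cmod (y c))\<^sup>2)) {c..d}"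
    unfolding cmod_power2 by (simp add: o_def power2_eq_square mult.commute)
  have G: "((\<lambda>x. 2 * (cmod (y' x) * cmod (y x))) has_integral 2 * integral {c..d} (\<lambda>x. cmod (y' x) * cmod (y x))) {c..d}"
    using assms(3) abs_cont_on_imp_continuous_on[OF assms(2)]
    by (intro has_integral_mult_right integrable_integral integrable_continuous_real continuous_intros)
  have "norm (2 * Re (y' x * cnj (y x))) \<le> 2 * (cmod (y' x) * cmod (y x))" for x
    using abs_Re_le_cmod[of "y' x * cnj (y x)"] by (simp add: norm_mult)
  then have "norm (integral {c..d} (\<lambda>x. 2 * Re (y' x * cnj (y x))))
      \<le> integral {c..d} (\<lambda>x. 2 * (cmod (y' x) * cmod (y x)))"
    using F G by (intro integral_norm_bound_integral) auto
  with F G show ?thesis by (simp add: integral_unique)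
qed

lemma norm_sq_le_integral_norm_mult:
  fixes y y' :: "real \<Rightarrow> complex"
  assumes "abs_cont_on a b y" "continuous_on {a..b} y'" "negligible N"
    and "\<And>x. x \<in> {a..b} - N \<Longrightarrow> (y has_vector_derivative y' x) (at x within {a..b})"
    and "y a = 0" "y b = 0" "z \<in> {a..b}"
  shows "(cmod (y z))\<^sup>2 \<le> integral {a..b} (\<lambda>x. cmod (y' x) * cmod (y x))"
proof -
  have increment: "\<bar>(cmod (y d))\<^sup>2 - (cmod (y c))\<^sup>2\<bar> \<le> 2 * integral {c..d} (\<lambda>x. cmod (y' x) * cmod (y x))"
    if "a \<le> c" "c \<le> d" "d \<le> b" for c d
  proof (rule norm_sq_increment_le[OF \<open>c \<le> d\<close> abs_cont_on_subinterval[OF assms(1) that(1,3)] _ assms(3)])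
    show "continuous_on {c..d} y'" using that by (intro continuous_on_subset[OF assms(2)]) auto
    fix x assume "x \<in> {c..d} - N"
    with that show "(y has_vector_derivative y' x) (at x within {c..d})"
      by (intro has_vector_derivative_within_subset[OF assms(4)]) auto
  qed
  have "(\<lambda>x. cmod (y' x) * cmod (y x)) integrable_on {a..b}"
    using assms(2) abs_cont_on_imp_continuous_on[OF assms(1)]
    by (intro integrable_continuous_real continuous_intros)
  then have "integral {a..z} (\<lambda>x. cmod (y' x) * cmod (y x)) + integral {z..b} (\<lambda>x. cmod (y' x) * cmod (y x))
      = integral {a..b} (\<lambda>x. cmod (y' x) * cmod (y x))"
    using assms(7) by (intro Henstock_Kurzweil_Integration.integral_combine) auto
  moreover have "(cmod (y z))\<^sup>2 \<le> 2 * integral {a..z} (\<lambda>x. cmod (y' x) * cmod (y x))"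
    using increment[of a z] assms(5,7) by simp
  moreover have "(cmod (y z))\<^sup>2 \<le> 2 * integral {z..b} (\<lambda>x. cmod (y' x) * cmod (y x))"
    using increment[of z b] assms(6,7) by simp
  ultimately show ?thesis by linarith
qed

lemma integrable_on_continuous_mult:
  fixes h g :: "real \<Rightarrow> real"
  assumes "continuous_on {a..b} h" "g absolutely_integrable_on {a..b}"
  shows "(\<lambda>x. h x * g x) integrable_on {a..b}"
proof -
  have "(\<lambda>x. h x * g x) absolutely_integrable_on {a..b}"
  proof (rule absolutely_integrable_bounded_measurable_product_real)
    show "h \<in> borel_measurable (lebesgue_on {a..b})"
      using continuous_imp_measurable_on_sets_lebesgue[OF assms(1)] by simp
    show "bounded (h ` {a..b})"
      using compact_continuous_image[OF assms(1)] compact_imp_bounded by blast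
  qed (use assms in auto)
  then show ?thesis by (rule set_lebesgue_integral_eq_integral(1))
qed

lemma integral_le_off_negligible:
  fixes f g :: "'a::euclidean_space \<Rightarrow> real"
  assumes "f integrable_on S" "g integrable_on S" "negligible N"
    and "\<And>x. x \<in> S - N \<Longrightarrow> f x \<le> g x"
  shows "integral S f \<le> integral S g"
proof -
  define f' where "f' x = (if x \<in> N then g x else f x)" for x
  have "integral S f = integral S f'"
    using assms(3) by (intro integral_spike) (auto simp: f'_def)
  also have "\<dots> \<le> integral S g"
  proof (rule integral_le)
    show "f' integrable_on S"
      using assms(1,3) by (rule integrable_spike) (auto simp: f'_def)
  qed (use assms in \<open>auto simp: f'_def\<close>)
  finally show ?thesis .
qed

lemma has_integral_of_real_minus_mult:
  fixes f g :: "real \<Rightarrow> real"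
  assumes "f integrable_on S" "g integrable_on S"
  shows "((\<lambda>x. complex_of_real (f x) - c * of_real (g x))
    has_integral (of_real (integral S f) - c * of_real (integral S g))) S"
  using assms by (intro has_integral_diff has_integral_mult_right has_integral_of_real integrable_integral)

lemma neg_part_nonneg: "0 \<le> neg_part q x"
  by (simp add: neg_part_def)

lemma add_neg_part_nonneg: "0 \<le> q x + neg_part q x"
  by (simp add: neg_part_def)

lemma abs_eq_add_two_neg_part: "\<bar>q x\<bar> = q x + 2 * neg_part q x"
  by (simp add: neg_part_def abs_if min_def)

lemma neg_part_absolutely_integrable:
  assumes "q absolutely_integrable_on S"
  shows "neg_part q absolutely_integrable_on S"
proof -
  have "neg_part q = (\<lambda>x. (\<bar>q x\<bar> - q x) / 2)"
    by (auto simp: neg_part_def fun_eq_iff min_def)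
  then show ?thesis
    using set_integral_diff(1)[OF set_integrable_abs[OF assms] assms] by simp
qed

lemma L1norm_neg_part:
  assumes "q absolutely_integrable_on {-1..1}"
  shows "L1norm (neg_part q) = integral {-1..1} (neg_part q)"
  unfolding L1norm_def
  using set_lebesgue_integral_eq_integral(2)[OF neg_part_absolutely_integrable[OF assms]]
  by (simp add: neg_part_def)

lemma S1_lmeasurable:
  assumes "w absolutely_integrable_on {-1..1}"
  shows "S1 w \<epsilon> \<in> lmeasurable"
proof -
  have "(\<lambda>x. indicator {-1..1} x *\<^sub>R w x) \<in> borel_measurable lebesgue"
    using assms unfolding set_integrable_def by (rule borel_measurable_integrable)
  moreover have "(\<lambda>x::real. x) \<in> borel_measurable lebesgue"
    by (rule measurable_completion[OF measurable_ident_sets[OF sets_lborel]])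
  ultimately have "{x \<in> space lebesgue. x * (indicator {-1..1} x *\<^sub>R w x) < \<epsilon>} \<in> sets lebesgue"
    by (intro borel_measurable_less borel_measurable_times) auto
  moreover have "S1 w \<epsilon> = {-1..1} \<inter> {x \<in> space lebesgue. x * (indicator {-1..1} x *\<^sub>R w x) < \<epsilon>}"
    by (auto simp: S1_def indicator_def)
  ultimately have "S1 w \<epsilon> \<in> sets lebesgue" by auto
  moreover have "bounded (S1 w \<epsilon>)"
    by (rule bounded_subset[of "{-1..1}"]) (auto simp: S1_def)
  ultimately show ?thesis by (simp add: bounded_set_imp_lmeasurable)
qed

lemma m1_le_2:
  assumes "w absolutely_integrable_on {-1..1}"
  shows "m1 w \<epsilon> \<le> 2"
proof -
  have "m1 w \<epsilon> \<le> measure lebesgue {-1..1::real}"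
    unfolding m1_def using S1_lmeasurable[OF assms]
    by (intro measure_mono_fmeasurable) (auto simp: S1_def)
  then show ?thesis by simp
qed

lemma integral_weight_lower_bound:
  fixes w \<rho> :: "real \<Rightarrow> real"
  assumes w: "w absolutely_integrable_on {-1..1}"
    and pos: "AE x in lebesgue. x \<in> {-1..1} \<longrightarrow> x * w x > 0"
    and \<rho>: "continuous_on {-1..1} \<rho>" "\<And>x. x \<in> {-1..1} \<Longrightarrow> 0 \<le> \<rho> x \<and> \<rho> x \<le> M"
    and "\<epsilon> > 0"
  shows "\<epsilon> * integral {-1..1} \<rho> - \<epsilon> * M * m1 w \<epsilon> \<le> integral {-1..1} (\<lambda>x. x * \<rho> x * w x)"
proof -
  obtain N where "negligible N" and N: "\<And>x. x \<in> {-1..1} - N \<Longrightarrow> x * w x > 0"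
    using pos unfolding eventually_ae_filter_negligible by auto
  have S: "S1 w \<epsilon> \<in> lmeasurable" "S1 w \<epsilon> \<inter> {-1..1} = S1 w \<epsilon>"
    using S1_lmeasurable[OF w] by (auto simp: S1_def)
  have ind: "indicat_real (S1 w \<epsilon>) integrable_on {-1..1}"
    "integral {-1..1} (indicat_real (S1 w \<epsilon>)) = m1 w \<epsilon>"
    using S integral_indicator[of "S1 w \<epsilon>" "{-1..1}"] by (simp_all add: integrable_on_indicator m1_def)
  have lower_int: "(\<lambda>x. \<epsilon> * \<rho> x - \<epsilon> * M * indicat_real (S1 w \<epsilon>) x) integrable_on {-1..1}"
    using integrable_continuous_real[OF \<rho>(1)] ind(1) by (intro integrable_diff integrable_on_mult_right)
  have weighted_int: "(\<lambda>x. x * \<rho> x * w x) integrable_on {-1..1}"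
    using \<rho>(1) by (intro integrable_on_continuous_mult[OF _ w] continuous_intros)
  have "\<epsilon> * \<rho> x - \<epsilon> * M * indicat_real (S1 w \<epsilon>) x \<le> x * \<rho> x * w x"
    if "x \<in> {-1..1} - N" for x
  proof (cases "x \<in> S1 w \<epsilon>")
    case True
    have "\<epsilon> * \<rho> x \<le> \<epsilon> * M" "0 \<le> (x * w x) * \<rho> x"
      using \<rho>(2)[of x] N[OF that] \<open>\<epsilon> > 0\<close> that by auto
    then show ?thesis using True by (simp add: mult_ac)
  next
    case False
    then have "\<epsilon> \<le> x * w x" using that by (auto simp: S1_def)
    then have "\<epsilon> * \<rho> x \<le> (x * w x) * \<rho> x"
      using \<rho>(2)[of x] that by (intro mult_right_mono) auto
    then show ?thesis using False by (simp add: mult_ac)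
  qed
  then have "integral {-1..1} (\<lambda>x. \<epsilon> * \<rho> x - \<epsilon> * M * indicat_real (S1 w \<epsilon>) x)
      \<le> integral {-1..1} (\<lambda>x. x * \<rho> x * w x)"
    by (rule integral_le_off_negligible[OF lower_int weighted_int \<open>negligible N\<close>])
  moreover have "integral {-1..1} (\<lambda>x. \<epsilon> * \<rho> x - \<epsilon> * M * indicat_real (S1 w \<epsilon>) x)
      = \<epsilon> * integral {-1..1} \<rho> - \<epsilon> * M * m1 w \<epsilon>"
    using integrable_continuous_real[OF \<rho>(1)] ind by (subst integral_diff) (auto intro: integrable_on_mult_right)
  ultimately show ?thesis by simp
qed

lemma le_of_am_gm_family:
  fixes P D Y Q :: real
  assumes amgm: "\<And>t. 0 < t \<Longrightarrow> P \<le> (t * D + Y / t) / 2"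
    and "D \<le> Q * P" "0 \<le> Q" "0 \<le> P"
  shows "P \<le> Q * Y"
proof (cases "Q = 0")
  case True
  show ?thesis
  proof (rule ccontr)
    assume "\<not> P \<le> Q * Y"
    have bound: "P \<le> Y / (2 * t)" if "0 < t" for t
    proof -
      have "t * D \<le> 0" using that assms(2) True by (simp add: mult_nonneg_nonpos)
      then show ?thesis using amgm[OF that] by simp
    qed
    then have "0 < P" "0 \<le> Y" using \<open>\<not> P \<le> Q * Y\<close> True bound[of 1] by auto
    then have "P \<le> Y / (2 * ((Y + 1) / P))" by (intro bound) simp
    also have "\<dots> < P" using \<open>0 < P\<close> \<open>0 \<le> Y\<close> by (simp add: field_simps add_nonneg_pos)
    finally show False by simp
  qed
next
  case False
  then have "0 < Q" using assms(3) by simp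
  have "P \<le> (D / Q) / 2 + (Q * Y) / 2"
    using amgm[of "1 / Q"] \<open>0 < Q\<close> by (simp add: mult.commute add_divide_distrib)
  also have "\<dots> \<le> P / 2 + (Q * Y) / 2"
    using assms(2) \<open>0 < Q\<close> by (simp add: divide_le_eq mult.commute)
  finally show ?thesis by simp
qed

lemma eigenvalue_bound_arith:
  fixes P Q Y A m \<epsilon> re im :: real
  assumes "0 < P" "0 \<le> Q" "P \<le> Q * Y" "\<epsilon> * Y - \<epsilon> * P * m \<le> A"
    and "0 < \<epsilon>" "0 \<le> m" "m \<le> 2" "8 * Q\<^sup>2 * m < 1"
    and "\<bar>re * A\<bar> \<le> P + 2 * Q * P" "\<bar>im * A\<bar> \<le> P"
  shows "\<bar>re\<bar> \<le> 4 / \<epsilon> * (Q + 4 * Q\<^sup>2) \<and> \<bar>im\<bar> \<le> 4 / \<epsilon> * Q"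
proof -
  have "0 < Q * Y" using assms(1,3) by linarith
  then have "0 < Q" "0 < Y" using assms(2) by (auto simp: zero_less_mult_iff)
  have "Q * m \<le> 1 / 2"
  proof (rule ccontr)
    assume "\<not> Q * m \<le> 1 / 2"
    moreover from this have "1 < 4 * Q" using assms(7) \<open>0 < Q\<close> mult_left_mono[OF assms(7), of Q] by linarith
    ultimately have "1 * 1 < (4 * Q) * (2 * (Q * m))" by (intro mult_strict_mono) auto
    with assms(8) show False by (simp add: power2_eq_square algebra_simps)
  qed
  have "P * m \<le> Y * (Q * m)"
    using mult_right_mono[OF assms(3) assms(6)] by (simp add: mult_ac)
  also have "\<dots> \<le> Y * (1 / 2)"
    using \<open>Q * m \<le> 1 / 2\<close> \<open>0 < Y\<close> by (intro mult_left_mono) auto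
  finally have "\<epsilon> * (P * m) \<le> \<epsilon> * (Y * (1 / 2))"
    using \<open>0 < \<epsilon>\<close> by (intro mult_left_mono) auto
  with assms(4) have A: "\<epsilon> * Y / 2 \<le> A" by (simp add: mult_ac)
  moreover have "0 < \<epsilon> * Y / 2" using \<open>0 < \<epsilon>\<close> \<open>0 < Y\<close> by simp
  ultimately have "0 < A" by linarith
  have scale: "\<bar>x\<bar> \<le> 2 * C / \<epsilon>" if "\<bar>x * A\<bar> \<le> C * Y" for x C
  proof -
    have "\<bar>x\<bar> * (\<epsilon> * Y / 2) \<le> \<bar>x\<bar> * A" using A by (intro mult_left_mono) auto
    also have "\<dots> \<le> C * Y" using that \<open>0 < A\<close> by (simp add: abs_mult)
    finally have "(\<bar>x\<bar> * \<epsilon> / 2) * Y \<le> C * Y" by (simp add: algebra_simps)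
    then have "\<bar>x\<bar> * \<epsilon> / 2 \<le> C" using \<open>0 < Y\<close> by simp
    then show ?thesis using \<open>0 < \<epsilon>\<close> by (simp add: field_simps)
  qed
  have "\<bar>im\<bar> \<le> 2 * Q / \<epsilon>"
    using scale[of im Q] assms(3,10) by (simp add: mult.commute)
  moreover have "P + 2 * Q * P \<le> (Q + 2 * Q\<^sup>2) * Y"
    using mult_left_mono[OF assms(3), of "1 + 2 * Q"] \<open>0 < Q\<close> by (simp add: power2_eq_square algebra_simps)
  then have "\<bar>re\<bar> \<le> 2 * (Q + 2 * Q\<^sup>2) / \<epsilon>"
    using scale[of re "Q + 2 * Q\<^sup>2"] assms(9) by linarith
  moreover have "2 * Q / \<epsilon> \<le> 4 * Q / \<epsilon>" "2 * (Q + 2 * Q\<^sup>2) / \<epsilon> \<le> 4 * (Q + 4 * Q\<^sup>2) / \<epsilon>"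
    using \<open>0 < Q\<close> \<open>0 < \<epsilon>\<close> by (intro divide_right_mono; simp)+
  ultimately show ?thesis by simp
qed

section \<open>Eigenfunctions of the Dirichlet problem\<close>

locale dirichlet_eigenfunction =
  fixes q w :: "real \<Rightarrow> real" and lam :: complex and y y' :: "real \<Rightarrow> complex" and N :: "real set"
  assumes q: "q absolutely_integrable_on {-1..1}"
    and w: "w absolutely_integrable_on {-1..1}"
    and abs_cont_y: "abs_cont_on (-1) 1 y"
    and abs_cont_y': "abs_cont_on (-1) 1 y'"
    and negligible_N: "negligible N"
    and y_deriv: "\<And>x. x \<in> {-1..1} - N \<Longrightarrow> (y has_vector_derivative y' x) (at x within {-1..1})"
    and y'_deriv: "\<And>x. x \<in> {-1..1} - N \<Longrightarrow>
      (y' has_vector_derivative (of_real (q x) - lam * of_real (w x)) * y x) (at x within {-1..1})"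
    and y_boundary: "y (-1) = 0" "y 1 = 0"
begin

abbreviation "mass \<equiv> integral {-1..1} (\<lambda>x. (cmod (y x))\<^sup>2)"
abbreviation "kinetic \<equiv> integral {-1..1} (\<lambda>x. (cmod (y' x))\<^sup>2)"
abbreviation "cross \<equiv> integral {-1..1} (\<lambda>x. cmod (y' x) * cmod (y x))"

lemma continuous_y: "continuous_on {-1..1} y"
  using abs_cont_on_imp_continuous_on[OF abs_cont_y] by simp

lemma continuous_y': "continuous_on {-1..1} y'"
  using abs_cont_on_imp_continuous_on[OF abs_cont_y'] by simp

lemma integrable_continuous_mult_q: "continuous_on {-1..1} h \<Longrightarrow> (\<lambda>x. h x * q x) integrable_on {-1..1}"
  using integrable_on_continuous_mult[OF _ q] by simp

lemma integrable_continuous_mult_w: "continuous_on {-1..1} h \<Longrightarrow> (\<lambda>x. h x * w x) integrable_on {-1..1}"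
  using integrable_on_continuous_mult[OF _ w] by simp

lemma sq_norm_le_cross:
  assumes "x \<in> {-1..1}"
  shows "(cmod (y x))\<^sup>2 \<le> cross"
  using norm_sq_le_integral_norm_mult[OF abs_cont_y continuous_y' negligible_N y_deriv y_boundary assms]
  by simp

lemma continuous_sq_norm: "continuous_on {-1..1} (\<lambda>x. (cmod (y x))\<^sup>2)" "continuous_on {-1..1} (\<lambda>x. (cmod (y' x))\<^sup>2)"
  by (intro continuous_intros continuous_y continuous_y')+

lemma energy_identity:
  "complex_of_real (integral {-1..1} (\<lambda>x. (cmod (y' x))\<^sup>2 + (cmod (y x))\<^sup>2 * q x))
    = lam * of_real (integral {-1..1} (\<lambda>x. (cmod (y x))\<^sup>2 * w x))"
proof -
  have "((\<lambda>x. y' x * cnj (y' x) + (of_real (q x) - lam * of_real (w x)) * y x * cnj (y x)) has_integral 0) {-1..1}"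
    using abs_cont_on_integration_by_parts[OF _ abs_cont_y' abs_cont_on_cnj[OF abs_cont_y] negligible_N
        y'_deriv has_vector_derivative_cnj[OF y_deriv]] y_boundary
    by simp
  moreover have "y' x * cnj (y' x) + (of_real (q x) - lam * of_real (w x)) * y x * cnj (y x)
      = of_real ((cmod (y' x))\<^sup>2 + (cmod (y x))\<^sup>2 * q x) - lam * of_real ((cmod (y x))\<^sup>2 * w x)" for x
    unfolding of_real_add of_real_mult complex_norm_square by (simp add: algebra_simps)
  ultimately have "((\<lambda>x. of_real ((cmod (y' x))\<^sup>2 + (cmod (y x))\<^sup>2 * q x) - lam * of_real ((cmod (y x))\<^sup>2 * w x))
      has_integral 0) {-1..1}" by simp
  moreover have "((\<lambda>x. of_real ((cmod (y' x))\<^sup>2 + (cmod (y x))\<^sup>2 * q x) - lam * of_real ((cmod (y x))\<^sup>2 * w x))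
      has_integral (of_real (integral {-1..1} (\<lambda>x. (cmod (y' x))\<^sup>2 + (cmod (y x))\<^sup>2 * q x))
        - lam * of_real (integral {-1..1} (\<lambda>x. (cmod (y x))\<^sup>2 * w x)))) {-1..1}"
    using integrable_continuous_real[OF continuous_sq_norm(2)] integrable_continuous_mult_q[OF continuous_sq_norm(1)]
      integrable_continuous_mult_w[OF continuous_sq_norm(1)]
    by (intro has_integral_of_real_minus_mult integrable_add)
  ultimately have "0 = of_real (integral {-1..1} (\<lambda>x. (cmod (y' x))\<^sup>2 + (cmod (y x))\<^sup>2 * q x))
        - lam * of_real (integral {-1..1} (\<lambda>x. (cmod (y x))\<^sup>2 * w x))"
    by (rule has_integral_unique)
  then show ?thesis by simp
qed

lemma weighted_mass_zero:
  assumes "Im lam \<noteq> 0"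
  shows "integral {-1..1} (\<lambda>x. (cmod (y x))\<^sup>2 * w x) = 0"
  using arg_cong[OF energy_identity, of Im] assms by simp

lemma kinetic_plus_potential_zero:
  assumes "Im lam \<noteq> 0"
  shows "integral {-1..1} (\<lambda>x. (cmod (y' x))\<^sup>2 + (cmod (y x))\<^sup>2 * q x) = 0"
  using arg_cong[OF energy_identity, of Re] weighted_mass_zero[OF assms] by simp

lemma integrable_sq_norm_neg_part:
  "(\<lambda>x. (cmod (y x))\<^sup>2 * neg_part q x) integrable_on {-1..1}"
  using integrable_on_continuous_mult[OF continuous_sq_norm(1) neg_part_absolutely_integrable[OF q]] .

lemma kinetic_le_neg_part:
  assumes "Im lam \<noteq> 0"
  shows "kinetic \<le> integral {-1..1} (\<lambda>x. (cmod (y x))\<^sup>2 * neg_part q x)"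
proof -
  have E: "(\<lambda>x. (cmod (y' x))\<^sup>2 + (cmod (y x))\<^sup>2 * q x) integrable_on {-1..1}"
    using integrable_continuous_real[OF continuous_sq_norm(2)] integrable_continuous_mult_q[OF continuous_sq_norm(1)]
    by (rule integrable_add)
  have "integral {-1..1} (\<lambda>x. (cmod (y' x))\<^sup>2)
      \<le> integral {-1..1} (\<lambda>x. ((cmod (y' x))\<^sup>2 + (cmod (y x))\<^sup>2 * q x) + (cmod (y x))\<^sup>2 * neg_part q x)"
  proof (rule integral_le)
    show "(\<lambda>x. (cmod (y' x))\<^sup>2) integrable_on {-1..1}"
      by (rule integrable_continuous_real[OF continuous_sq_norm(2)])
    show "(\<lambda>x. ((cmod (y' x))\<^sup>2 + (cmod (y x))\<^sup>2 * q x) + (cmod (y x))\<^sup>2 * neg_part q x) integrable_on {-1..1}"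
      using E integrable_sq_norm_neg_part by (rule integrable_add)
    show "(cmod (y' x))\<^sup>2 \<le> ((cmod (y' x))\<^sup>2 + (cmod (y x))\<^sup>2 * q x) + (cmod (y x))\<^sup>2 * neg_part q x" for x
      using mult_nonneg_nonneg[OF zero_le_power2 add_neg_part_nonneg] by (simp add: algebra_simps)
  qed
  also have "\<dots> = integral {-1..1} (\<lambda>x. (cmod (y x))\<^sup>2 * neg_part q x)"
    using kinetic_plus_potential_zero[OF assms] integral_add[OF E integrable_sq_norm_neg_part] by simp
  finally show ?thesis .
qed

lemma neg_part_mass_le:
  "integral {-1..1} (\<lambda>x. (cmod (y x))\<^sup>2 * neg_part q x)
    \<le> integral {-1..1} (neg_part q) * cross"
proof -
  have "integral {-1..1} (\<lambda>x. (cmod (y x))\<^sup>2 * neg_part q x)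
      \<le> integral {-1..1} (\<lambda>x. cross * neg_part q x)"
    using integrable_sq_norm_neg_part sq_norm_le_cross
      set_lebesgue_integral_eq_integral(1)[OF neg_part_absolutely_integrable[OF q]]
    by (intro integral_le integrable_on_mult_right mult_right_mono neg_part_nonneg) auto
  then show ?thesis by (simp add: mult.commute)
qed

lemma integrable_cross: "(\<lambda>x. cmod (y' x) * cmod (y x)) integrable_on {-1..1}"
  using continuous_y continuous_y' by (intro integrable_continuous_real continuous_intros)

lemma cross_le_am_gm:
  assumes "0 < t"
  shows "cross \<le> (t * kinetic + mass / t) / 2"
proof -
  have "cross \<le> integral {-1..1} (\<lambda>x. t / 2 * (cmod (y' x))\<^sup>2 + 1 / (2 * t) * (cmod (y x))\<^sup>2)"
  proof (rule integral_le[OF integrable_cross])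
    show "(\<lambda>x. t / 2 * (cmod (y' x))\<^sup>2 + 1 / (2 * t) * (cmod (y x))\<^sup>2) integrable_on {-1..1}"
      using continuous_sq_norm by (intro integrable_add integrable_on_mult_right integrable_continuous_real)
    show "cmod (y' x) * cmod (y x) \<le> t / 2 * (cmod (y' x))\<^sup>2 + 1 / (2 * t) * (cmod (y x))\<^sup>2" for x
    proof -
      have "0 \<le> (t * cmod (y' x) - cmod (y x))\<^sup>2 / (2 * t)" using assms by simp
      then show ?thesis using assms by (simp add: field_simps power2_eq_square)
    qed
  qed
  also have "\<dots> = t / 2 * kinetic + 1 / (2 * t) * mass"
    using integral_add[OF integrable_on_mult_right integrable_on_mult_right,
        OF integrable_continuous_real integrable_continuous_real, OF continuous_sq_norm(2,1),
        of "t / 2" "1 / (2 * t)"]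
    by (simp only: integral_mult_right)
  also have "\<dots> = (t * kinetic + mass / t) / 2"
    by (simp add: field_simps)
  finally show ?thesis .
qed

lemma integral_neg_part_nonneg: "0 \<le> integral {-1..1} (neg_part q)"
  using set_lebesgue_integral_eq_integral(1)[OF neg_part_absolutely_integrable[OF q]]
  by (intro integral_nonneg neg_part_nonneg)

lemma cross_le_neg_part_mass:
  assumes "Im lam \<noteq> 0"
  shows "cross \<le> integral {-1..1} (neg_part q) * mass"
proof (rule le_of_am_gm_family[OF cross_le_am_gm])
  show "kinetic \<le> integral {-1..1} (neg_part q) * cross"
    using kinetic_le_neg_part[OF assms] neg_part_mass_le by linarith
  show "0 \<le> integral {-1..1} (neg_part q)"
    by (rule integral_neg_part_nonneg)
  show "0 \<le> cross"
    by (intro integral_nonneg integrable_cross) simp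
qed

lemma virial_identity:
  "complex_of_real (integral {-1..1} (\<lambda>x. x * (cmod (y' x))\<^sup>2 + x * (cmod (y x))\<^sup>2 * q x))
     - lam * of_real (integral {-1..1} (\<lambda>x. x * (cmod (y x))\<^sup>2 * w x))
     + integral {-1..1} (\<lambda>x. y' x * cnj (y x)) = 0"
proof -
  have "((\<lambda>x. of_real x * y' x) has_vector_derivative
      of_real x * ((of_real (q x) - lam * of_real (w x)) * y x) + 1 * y' x) (at x within {-1..1})"
    if "x \<in> {-1..1} - N" for x
  proof (rule has_vector_derivative_mult[OF _ y'_deriv[OF that]])
    show "(complex_of_real has_vector_derivative 1) (at x within {-1..1})"
      using has_vector_derivative_of_real[OF DERIV_ident] by simp
  qed
  from abs_cont_on_integration_by_parts[OF _ abs_cont_on_mult[OF abs_cont_on_of_real abs_cont_y']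
      abs_cont_on_cnj[OF abs_cont_y] negligible_N this has_vector_derivative_cnj[OF y_deriv]]
  have "((\<lambda>x. of_real x * y' x * cnj (y' x)
      + (of_real x * ((of_real (q x) - lam * of_real (w x)) * y x) + 1 * y' x) * cnj (y x)) has_integral 0) {-1..1}"
    using y_boundary by simp
  moreover have "of_real x * y' x * cnj (y' x)
      + (of_real x * ((of_real (q x) - lam * of_real (w x)) * y x) + 1 * y' x) * cnj (y x)
    = (of_real (x * (cmod (y' x))\<^sup>2 + x * (cmod (y x))\<^sup>2 * q x) - lam * of_real (x * (cmod (y x))\<^sup>2 * w x))
      + y' x * cnj (y x)" for x
    unfolding of_real_add of_real_mult complex_norm_square by (simp add: algebra_simps)
  ultimately have "((\<lambda>x. (of_real (x * (cmod (y' x))\<^sup>2 + x * (cmod (y x))\<^sup>2 * q x)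
      - lam * of_real (x * (cmod (y x))\<^sup>2 * w x)) + y' x * cnj (y x)) has_integral 0) {-1..1}"
    by simp
  moreover have "((\<lambda>x. (of_real (x * (cmod (y' x))\<^sup>2 + x * (cmod (y x))\<^sup>2 * q x)
      - lam * of_real (x * (cmod (y x))\<^sup>2 * w x)) + y' x * cnj (y x)) has_integral
      (of_real (integral {-1..1} (\<lambda>x. x * (cmod (y' x))\<^sup>2 + x * (cmod (y x))\<^sup>2 * q x))
       - lam * of_real (integral {-1..1} (\<lambda>x. x * (cmod (y x))\<^sup>2 * w x))
       + integral {-1..1} (\<lambda>x. y' x * cnj (y x)))) {-1..1}"
  proof (intro has_integral_add has_integral_of_real_minus_mult integrable_integral)
    have c: "continuous_on {-1..1} (\<lambda>x. x * (cmod (y x))\<^sup>2)" "continuous_on {-1..1} (\<lambda>x. x * (cmod (y' x))\<^sup>2)"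
      by (intro continuous_intros continuous_sq_norm)+
    show "(\<lambda>x. x * (cmod (y' x))\<^sup>2 + x * (cmod (y x))\<^sup>2 * q x) integrable_on {-1..1}"
      by (rule integrable_add[OF integrable_continuous_real[OF c(2)] integrable_continuous_mult_q[OF c(1)]])
    show "(\<lambda>x. x * (cmod (y x))\<^sup>2 * w x) integrable_on {-1..1}"
      by (rule integrable_continuous_mult_w[OF c(1)])
    show "(\<lambda>x. y' x * cnj (y x)) integrable_on {-1..1}"
      using continuous_y continuous_y' by (intro integrable_continuous_real continuous_intros)
  qed
  ultimately show ?thesis
    by (rule has_integral_unique[symmetric])
qed

lemma virial_imaginary_part:
  "Im lam * integral {-1..1} (\<lambda>x. x * (cmod (y x))\<^sup>2 * w x) = Im (integral {-1..1} (\<lambda>x. y' x * cnj (y x)))"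
  using arg_cong[OF virial_identity, of Im] by simp

lemma virial_real_part:
  "Re lam * integral {-1..1} (\<lambda>x. x * (cmod (y x))\<^sup>2 * w x)
    = integral {-1..1} (\<lambda>x. x * (cmod (y' x))\<^sup>2 + x * (cmod (y x))\<^sup>2 * q x)
      + Re (integral {-1..1} (\<lambda>x. y' x * cnj (y x)))"
  using arg_cong[OF virial_identity, of Re] by simp

lemma norm_integral_le_cross: "cmod (integral {-1..1} (\<lambda>x. y' x * cnj (y x))) \<le> cross"
  using continuous_y continuous_y' integrable_cross
  by (intro integral_norm_bound_integral integrable_continuous_real continuous_intros) (simp_all add: norm_mult)

lemma abs_virial_potential_le:
  assumes "Im lam \<noteq> 0"
  shows "\<bar>integral {-1..1} (\<lambda>x. x * (cmod (y' x))\<^sup>2 + x * (cmod (y x))\<^sup>2 * q x)\<bar>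
    \<le> 2 * integral {-1..1} (\<lambda>x. (cmod (y x))\<^sup>2 * neg_part q x)"
proof -
  have c: "continuous_on {-1..1} (\<lambda>x. x * (cmod (y x))\<^sup>2)" "continuous_on {-1..1} (\<lambda>x. x * (cmod (y' x))\<^sup>2)"
    by (intro continuous_intros continuous_sq_norm)+
  have E: "(\<lambda>x. (cmod (y' x))\<^sup>2 + (cmod (y x))\<^sup>2 * q x) integrable_on {-1..1}"
    using integrable_continuous_real[OF continuous_sq_norm(2)] integrable_continuous_mult_q[OF continuous_sq_norm(1)]
    by (rule integrable_add)
  have "norm (integral {-1..1} (\<lambda>x. x * (cmod (y' x))\<^sup>2 + x * (cmod (y x))\<^sup>2 * q x))
      \<le> integral {-1..1} (\<lambda>x. ((cmod (y' x))\<^sup>2 + (cmod (y x))\<^sup>2 * q x) + 2 * ((cmod (y x))\<^sup>2 * neg_part q x))"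
  proof (rule integral_norm_bound_integral)
    show "(\<lambda>x. x * (cmod (y' x))\<^sup>2 + x * (cmod (y x))\<^sup>2 * q x) integrable_on {-1..1}"
      by (rule integrable_add[OF integrable_continuous_real[OF c(2)] integrable_continuous_mult_q[OF c(1)]])
    show "(\<lambda>x. ((cmod (y' x))\<^sup>2 + (cmod (y x))\<^sup>2 * q x) + 2 * ((cmod (y x))\<^sup>2 * neg_part q x)) integrable_on {-1..1}"
      by (rule integrable_add[OF E integrable_on_mult_right[OF integrable_sq_norm_neg_part]])
    fix x :: real assume "x \<in> {-1..1}"
    then have "\<bar>x\<bar> \<le> 1" by auto
    then have "\<bar>x * ((cmod (y' x))\<^sup>2 + (cmod (y x))\<^sup>2 * q x)\<bar> \<le> \<bar>(cmod (y' x))\<^sup>2 + (cmod (y x))\<^sup>2 * q x\<bar>"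
      by (simp add: abs_mult mult_left_le_one_le)
    also have "\<dots> \<le> (cmod (y' x))\<^sup>2 + (cmod (y x))\<^sup>2 * \<bar>q x\<bar>"
      by (simp add: abs_mult abs_triangle_ineq[THEN order_trans])
    finally show "norm (x * (cmod (y' x))\<^sup>2 + x * (cmod (y x))\<^sup>2 * q x)
        \<le> ((cmod (y' x))\<^sup>2 + (cmod (y x))\<^sup>2 * q x) + 2 * ((cmod (y x))\<^sup>2 * neg_part q x)"
      by (simp add: abs_eq_add_two_neg_part algebra_simps)
  qed
  also have "\<dots> = 2 * integral {-1..1} (\<lambda>x. (cmod (y x))\<^sup>2 * neg_part q x)"
    using kinetic_plus_potential_zero[OF assms]
      integral_add[OF E integrable_on_mult_right[OF integrable_sq_norm_neg_part], of 2]
    by simp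
  finally show ?thesis by simp
qed

theorem eigenvalue_bounds:
  assumes "Im lam \<noteq> 0" "\<exists>x\<in>{-1..1}. y x \<noteq> 0"
    and "AE x in lebesgue. x \<in> {-1..1} \<longrightarrow> x * w x > 0"
    and "\<epsilon> > 0" "8 * (L1norm (neg_part q))\<^sup>2 * m1 w \<epsilon> < 1"
  shows "\<bar>Re lam\<bar> \<le> 4 / \<epsilon> * (L1norm (neg_part q) + 4 * (L1norm (neg_part q))\<^sup>2) \<and>
    \<bar>Im lam\<bar> \<le> 4 / \<epsilon> * L1norm (neg_part q)"
proof (rule eigenvalue_bound_arith)
  obtain x0 where "x0 \<in> {-1..1}" "y x0 \<noteq> 0" using assms(2) by blast
  moreover have "0 < (cmod (y x0))\<^sup>2" using \<open>y x0 \<noteq> 0\<close> by simp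
  ultimately show "0 < cross" using sq_norm_le_cross[of x0] by linarith
  show "0 \<le> L1norm (neg_part q)"
    using integral_neg_part_nonneg by (simp add: L1norm_neg_part[OF q])
  show "m1 w \<epsilon> \<le> 2" "0 \<le> m1 w \<epsilon>"
    using m1_le_2[OF w] by (auto simp: m1_def)
  show "cross \<le> L1norm (neg_part q) * mass"
    using cross_le_neg_part_mass[OF assms(1)] by (simp add: L1norm_neg_part[OF q])
  show "\<epsilon> * mass - \<epsilon> * cross * m1 w \<epsilon> \<le> integral {-1..1} (\<lambda>x. x * (cmod (y x))\<^sup>2 * w x)"
    using sq_norm_le_cross continuous_sq_norm(1) by (intro integral_weight_lower_bound[OF w assms(3) _ _ assms(4)]) auto
  show "\<bar>Im lam * integral {-1..1} (\<lambda>x. x * (cmod (y x))\<^sup>2 * w x)\<bar> \<le> cross"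
    using virial_imaginary_part abs_Im_le_cmod norm_integral_le_cross by (metis order_trans)
  have "\<bar>Re lam * integral {-1..1} (\<lambda>x. x * (cmod (y x))\<^sup>2 * w x)\<bar>
      \<le> 2 * integral {-1..1} (\<lambda>x. (cmod (y x))\<^sup>2 * neg_part q x) + cross"
    using virial_real_part abs_virial_potential_le[OF assms(1)] abs_Re_le_cmod[of "integral {-1..1} (\<lambda>x. y' x * cnj (y x))"]
      norm_integral_le_cross by linarith
  then show "\<bar>Re lam * integral {-1..1} (\<lambda>x. x * (cmod (y x))\<^sup>2 * w x)\<bar>
      \<le> cross + 2 * L1norm (neg_part q) * cross"
    using neg_part_mass_le by (simp add: L1norm_neg_part[OF q])
qed (use assms in auto)

end

lemma is_eigenvalue_imp_dirichlet_eigenfunction: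
  assumes "q absolutely_integrable_on {-1..1}" "w absolutely_integrable_on {-1..1}" "is_eigenvalue q w lam"
  obtains y y' N where "dirichlet_eigenfunction q w lam y y' N" "\<exists>x\<in>{-1..1}. y x \<noteq> 0"
proof -
  obtain y y' :: "real \<Rightarrow> complex" where
    ac: "abs_cont_on (-1) 1 y" "abs_cont_on (-1) 1 y'"
    and y: "AE x in lebesgue. x \<in> {-1..1} \<longrightarrow> (y has_vector_derivative y' x) (at x within {-1..1})"
    and y': "AE x in lebesgue. x \<in> {-1..1} \<longrightarrow> (\<exists>y2. (y' has_vector_derivative y2) (at x within {-1..1}) \<and>
      - y2 + of_real (q x) * y x = lam * of_real (w x) * y x)"
    and boundary: "y (-1) = 0" "y 1 = 0" and nontrivial: "\<exists>x\<in>{-1..1}. y x \<noteq> 0"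
    using assms(3) unfolding is_eigenvalue_def by blast
  have "AE x in lebesgue. x \<in> {-1..1} \<longrightarrow> (y has_vector_derivative y' x) (at x within {-1..1}) \<and>
      (y' has_vector_derivative (of_real (q x) - lam * of_real (w x)) * y x) (at x within {-1..1})"
    using y y'
  proof eventually_elim
    case (elim x)
    show ?case
    proof
      assume "x \<in> {-1..1}"
      then obtain y2 where "(y' has_vector_derivative y2) (at x within {-1..1})"
        "- y2 + of_real (q x) * y x = lam * of_real (w x) * y x"
        using elim(2) by blast
      moreover from this(2) have "y2 = (of_real (q x) - lam * of_real (w x)) * y x"
        by (simp add: algebra_simps eq_neg_iff_add_eq_0)
      ultimately show "(y has_vector_derivative y' x) (at x within {-1..1}) \<and>
          (y' has_vector_derivative (of_real (q x) - lam * of_real (w x)) * y x) (at x within {-1..1})"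
        using elim(1) \<open>x \<in> {-1..1}\<close> by auto
    qed
  qed
  then obtain N where "negligible N" and N: "\<And>x. x \<in> {-1..1} - N \<Longrightarrow>
      (y has_vector_derivative y' x) (at x within {-1..1}) \<and>
      (y' has_vector_derivative (of_real (q x) - lam * of_real (w x)) * y x) (at x within {-1..1})"
    unfolding eventually_ae_filter_negligible by blast
  have "dirichlet_eigenfunction q w lam y y' N"
    using assms(1,2) ac \<open>negligible N\<close> N boundary by unfold_locales auto
  then show thesis using nontrivial by (rule that)
qed

theorem theorem1p2:
  fixes q w :: "real \<Rightarrow> real" and \<epsilon>1 :: real and lam :: complex
  assumes "set_integrable lebesgue {-1..1} q"
    and "set_integrable lebesgue {-1..1} w"
    and "AE x in lebesgue. x \<in> {-1..1} \<longrightarrow> w x \<noteq> 0"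
    and "AE x in lebesgue. x \<in> {-1..1} \<longrightarrow> x * w x > 0"
    and "\<epsilon>1 > 0"
    and "8 * (L1norm (neg_part q))\<^sup>2 * m1 w \<epsilon>1 < 1"
    and "Im lam \<noteq> 0"
    and "is_eigenvalue q w lam"
  shows "\<bar>Re lam\<bar> \<le> 4 / \<epsilon>1 * (L1norm (neg_part q) + 4 * (L1norm (neg_part q))\<^sup>2) \<and>
           \<bar>Im lam\<bar> \<le> 4 / \<epsilon>1 * L1norm (neg_part q)"
proof -
  obtain y y' N where "dirichlet_eigenfunction q w lam y y' N" "\<exists>x\<in>{-1..1}. y x \<noteq> 0"
    using is_eigenvalue_imp_dirichlet_eigenfunction[OF assms(1,2,8)] .
  then show ?thesis
    using dirichlet_eigenfunction.eigenvalue_bounds assms(4-7) by blast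
qed

end
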